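(* There exists a constant $C<\infty$ such that $\beta_\alpha<C$ for every $\alpha\in(1,2]$.
   Context: For $\alpha\in(1,2]$, $\beta_\alpha$ denotes the $\mathbb P$-a.s. Hausdorff dimension of the harmonic measure $\mu_\alpha$ on the boundary of the reduced stable tree $\Delta^{(\alpha)}$ (equivalently the a.s. constant value of $\lim_{r\downarrow0}\log\mu_\alpha(\mathcal B_{\mathbf d}(x,r))/\log r$ for $\mu_\alpha$-a.e. $x$). It is given by $$\beta_\alpha=\frac12\bigg(\frac{\big(\int\gamma_\alpha(\mathrm ds)\,s\big)^2}{\iint\gamma_\alpha(\mathrm ds)\gamma_\alpha(\mathrm dt)\frac{st}{s+t-1}}-1\bigg),$$ where $\gamma_\alpha$ is the law of the conductance $\mathcal C^{(\alpha)}$. Definitions: $\theta_2=\delta_2$; for $\alpha\in(1,2)$, $\theta_\alpha(0)=\theta_\alpha(1)=0$, $\theta_\alpha(k)=\frac{\alpha\Gamma(k-\alpha)}{k!\Gamma(2-\alpha)}$ for $k\ge2$. $\Delta^{(\alpha)}$ is the compact $\mathbb R$-tree obtained as follows: a root segment of length $U_\varnothing$ (uniform on $[0,1]$); at its top, $K_\varnothing\sim\theta_\alpha$ new segments are attached whose lengths are, conditionally, i.i.d. uniform on $[0,1-U_\varnothing]$; recursively each segment ending at height $h<1$ branches into an independent $\theta_\alpha$-distributed number of segments with i.i.d. lengths uniform on $[0,1-h]$; $\Delta^{(\alpha)}$ is the completion, with intrinsic metric $\mathbf d$ and boundary $\partial\Delta^{(\alpha)}$ the set of points at height $1$. $\mathcal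 C^{(\alpha)}$ is the effective conductance between the root and $\partial\Delta^{(\alpha)}$ when $\Delta^{(\alpha)}$ is viewed as an electrical network with unit resistance per unit length; $\mathcal C^{(\alpha)}\ge1$. $\mu_\alpha$ is the hitting distribution on $\partial\Delta^{(\alpha)}$ of Brownian motion on $\Delta^{(\alpha)}$ started at the root (linear Brownian motion on segments, reflected at the root, choosing each adjacent segment with equal probability at branching points). *)

theory Defs
  imports "HOL-Probability.Probability"
begin

definition theta :: "real \<Rightarrow> nat \<Rightarrow> real" where
  "theta \<alpha> k = (if \<alpha> = 2 then (if k = 2 then 1 else 0)
     else if k < 2 then 0
     else \<alpha> * Gamma (real k - \<alpha>) / (fact k * Gamma (2 - \<alpha>)))"

definition theta_measure :: "real \<Rightarrow> nat measure" where
  "theta_measure \<alpha> = density (count_space UNIV) (\<lambda>k. ennreal (theta \<alpha> k))"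

text \<open>Vertices (segments) are Ulam-Harris words: [] is the root segment, u @ [i]
  (i < K u) are the children of u. Each segment u carries an independent
  Y u uniform on [0,1] and an independent K u with law theta_alpha.
  If the bottom of segment u is at height h, its length is (1 - h) * Y u, i.e.
  uniform on [0, 1 - h] conditionally on the past.\<close>

text \<open>remaining height 1 - h above the top of segment u, given the path from the root\<close>
fun rem_above :: "(nat list \<Rightarrow> real) \<Rightarrow> nat list \<Rightarrow> nat list \<Rightarrow> real" where
  "rem_above Y v [] = 1 - Y v"
| "rem_above Y v (i # w) = (1 - Y v) * rem_above Y (v @ [i]) w"

definition rem_below :: "(nat list \<Rightarrow> real) \<Rightarrow> nat list \<Rightarrow> real" where
  "rem_below Y u = (if u = [] then 1 else rem_above Y [] (butlast u))"

definition seg_len :: "(nat list \<Rightarrow> real) \<Rightarrow> nat list \<Rightarrow> real" where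
  "seg_len Y u = rem_below Y u * Y u"

text \<open>Effective conductance between the bottom of segment u and the boundary of the
  subtree of generation n below it, when the tops of all segments n generations
  below u are shorted to the boundary (unit resistance per unit length).\<close>
fun cond_trunc :: "nat \<Rightarrow> (nat list \<Rightarrow> real) \<Rightarrow> (nat list \<Rightarrow> nat) \<Rightarrow> nat list \<Rightarrow> real" where
  "cond_trunc 0 Y K u = 1 / seg_len Y u"
| "cond_trunc (Suc n) Y K u =
     1 / (seg_len Y u + 1 / (\<Sum>i<K u. cond_trunc n Y K (u @ [i])))"

text \<open>Effective conductance between root and the boundary of the tree (limit of
  the decreasing truncated conductances).\<close>
definition conductance :: "(nat list \<Rightarrow> real \<times> nat) \<Rightarrow> real" where
  "conductance \<omega> = lim (\<lambda>n. cond_trunc n (\<lambda>u. fst (\<omega> u)) (\<lambda>u. snd (\<omega> u)) [])"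

definition tree_space :: "real \<Rightarrow> (nat list \<Rightarrow> real \<times> nat) measure" where
  "tree_space \<alpha> = PiM UNIV (\<lambda>_. uniform_measure lborel {0..1} \<Otimes>\<^sub>M theta_measure \<alpha>)"

definition gamma_law :: "real \<Rightarrow> real measure" where
  "gamma_law \<alpha> = distr (tree_space \<alpha>) borel conductance"

definition beta :: "real \<Rightarrow> real" where
  "beta \<alpha> = ((( \<integral>s. s \<partial>gamma_law \<alpha>) ^ 2
      / (\<integral>s. (\<integral>t. s * t / (s + t - 1) \<partial>gamma_law \<alpha>) \<partial>gamma_law \<alpha>)) - 1) / 2"

end

theory Submission
  imports Defs
begin

text \<open>Since the conductance is at least 1, the ratio \<open>s t / (s + t - 1)\<close> is at least 1
  \<open>\<gamma>\<^sub>\<alpha>\<close>-almost everywhere, so the denominator of \<open>\<beta>\<^sub>\<alpha>\<close> is 0 (when undefined) or at least 1,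
  and \<open>\<beta>\<^sub>\<alpha> \<le> (E C)\<^sup>2 / 2\<close>. To bound \<open>E C\<close> uniformly in \<open>\<alpha>\<close>, short the tree above the
  first generation: with root length \<open>a\<close>, \<open>k\<close> children and child lengths \<open>(1 - a) y\<^sub>i\<close> this gives
  \<open>C \<le> 1 / (a + 1 / \<Sum>\<^sub>i 1 / ((1 - a) y\<^sub>i))\<close>, which is at most
  \<open>a powr (-3/4) (2 \<surd>k + (\<Sum>\<^sub>i y\<^sub>i powr (-3/4)) / \<surd>k)\<close>. All marks are independent and
  \<open>E a powr (-3/4) = 4\<close>, so \<open>E C \<le> 24 E \<surd>K\<close>; finally \<open>\<theta>\<^sub>\<alpha>(k) \<le> 4 / k\<^sup>2\<close> for every \<open>\<alpha>\<close>
  gives \<open>E \<surd>K \<le> 4 \<zeta>(3/2)\<close>.\<close>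

section \<open>The offspring law\<close>

text \<open>For \<open>1 < \<alpha> < 2\<close> and \<open>k \<ge> 1\<close>: the tail \<open>\<theta>\<^sub>\<alpha>{k+1, k+2, ...}\<close>.\<close>
definition theta_tail :: "real \<Rightarrow> nat \<Rightarrow> real" where
  "theta_tail \<alpha> k = Gamma (real k + 1 - \<alpha>) / (fact k * Gamma (2 - \<alpha>))"

lemma theta_tail_one:
  assumes "\<alpha> < 2"
  shows "theta_tail \<alpha> 1 = 1"
proof -
  have "0 < Gamma (2 - \<alpha>)" using assms by (intro Gamma_real_pos) simp
  then show ?thesis by (simp add: theta_tail_def add_ac)
qed

lemma theta_tail_Suc:
  assumes "1 < \<alpha>" "\<alpha> < 2" "1 \<le> k"
  shows "theta_tail \<alpha> (Suc k) = theta_tail \<alpha> k * (real (Suc k) - \<alpha>) / real (Suc k)"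
proof -
  have "real k + 1 - \<alpha> \<notin> \<int>\<^sub>\<le>\<^sub>0"
    using assms nonpos_Ints_nonpos by fastforce
  then have "Gamma (real (Suc k) + 1 - \<alpha>) = (real k + 1 - \<alpha>) * Gamma (real k + 1 - \<alpha>)"
    using Gamma_plus1[of "real k + 1 - \<alpha>"] by (simp add: algebra_simps)
  moreover have "0 < Gamma (2 - \<alpha>)" using assms by (intro Gamma_real_pos) simp
  ultimately show ?thesis
    by (simp add: theta_tail_def field_simps)
qed

lemma theta_tail_bounds:
  assumes "1 < \<alpha>" "\<alpha> < 2" "1 \<le> k"
  shows "0 < theta_tail \<alpha> k \<and> theta_tail \<alpha> k \<le> 1 / real k"
  using assms(3)
proof (induction k rule: dec_induct)
  case base
  then show ?case using theta_tail_one[OF assms(2)] by simp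
next
  case (step k)
  have "theta_tail \<alpha> k * (real (Suc k) - \<alpha>) \<le> 1 / real k * real k"
    using step assms by (intro mult_mono) auto
  then show ?case
    using step assms by (auto simp: theta_tail_Suc divide_right_mono)
qed

lemma theta_eq_tail:
  assumes "1 < \<alpha>" "\<alpha> < 2" "2 \<le> k"
  shows "theta \<alpha> k = \<alpha> / real k * theta_tail \<alpha> (k - 1)"
proof -
  have "0 < Gamma (2 - \<alpha>)" using assms by (intro Gamma_real_pos) simp
  with assms show ?thesis
    by (cases k) (auto simp: theta_def theta_tail_def field_simps)
qed

lemma theta_eq_tail_diff:
  assumes "1 < \<alpha>" "\<alpha> < 2" "2 \<le> k"
  shows "theta \<alpha> k = theta_tail \<alpha> (k - 1) - theta_tail \<alpha> k"
proof -
  obtain j where j: "k = Suc j" "1 \<le> j" using assms(3) by (cases k) auto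
  have "theta_tail \<alpha> (k - 1) - theta_tail \<alpha> k = theta_tail \<alpha> j * (\<alpha> / real k)"
    using theta_tail_Suc[OF assms(1,2) j(2)] j by (simp add: field_simps)
  then show ?thesis
    using theta_eq_tail[OF assms] j by simp
qed

lemma theta_less_2: "k < 2 \<Longrightarrow> theta \<alpha> k = 0"
  by (simp add: theta_def)

lemma theta_nonneg:
  assumes "1 < \<alpha>" "\<alpha> \<le> 2"
  shows "0 \<le> theta \<alpha> k"
proof (cases "\<alpha> = 2 \<or> k < 2")
  case False
  with assms have "\<alpha> < 2" "2 \<le> k" by auto
  then have "0 < theta_tail \<alpha> (k - 1)"
    using assms theta_tail_bounds[of \<alpha> "k - 1"] by simp
  then show ?thesis
    using assms theta_eq_tail[OF _ \<open>\<alpha> < 2\<close> \<open>2 \<le> k\<close>] by simp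
qed (auto simp: theta_def)

lemma theta_le:
  assumes "1 < \<alpha>" "\<alpha> \<le> 2"
  shows "theta \<alpha> k \<le> 4 / (real k)\<^sup>2"
proof (cases "k < 2")
  case True
  then show ?thesis by (simp add: theta_less_2)
next
  case False
  have "theta \<alpha> k \<le> 2 / (real k * (real k - 1))"
  proof (cases "\<alpha> = 2")
    case False
    with assms have "\<alpha> < 2" by simp
    have "\<alpha> / real k * theta_tail \<alpha> (k - 1) \<le> 2 / real k * (1 / (real k - 1))"
      using theta_tail_bounds[OF assms(1) \<open>\<alpha> < 2\<close>, of "k - 1"] \<open>\<not> k < 2\<close> assms
      by (intro mult_mono divide_right_mono) (auto simp: of_nat_diff less_imp_le)
    then show ?thesis
      using theta_eq_tail[OF assms(1) \<open>\<alpha> < 2\<close>, of k] \<open>\<not> k < 2\<close> by simp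
  qed (use \<open>\<not> k < 2\<close> in \<open>auto simp: theta_def field_simps\<close>)
  also have "\<dots> \<le> 4 / (real k)\<^sup>2"
    using \<open>\<not> k < 2\<close> by (simp add: field_simps power2_eq_square)
  finally show ?thesis .
qed

lemma theta_sums:
  assumes "1 < \<alpha>" "\<alpha> \<le> 2"
  shows "theta \<alpha> sums 1"
proof (cases "\<alpha> = 2")
  case True
  then have "theta \<alpha> = (\<lambda>k. if k = 2 then 1 else 0)"
    by (auto simp: theta_def)
  then show ?thesis using sums_single[of 2 "\<lambda>_. 1::real"] by simp
next
  case False
  with assms have "\<alpha> < 2" by simp
  have partial_sums: "(\<Sum>k<n + 2. theta \<alpha> k) = 1 - theta_tail \<alpha> (n + 1)" for n
  proof (induction n)
    case 0
    then show ?case using theta_tail_one[OF \<open>\<alpha> < 2\<close>] by (simp add: theta_less_2)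
  next
    case (Suc n)
    then show ?case
      using theta_eq_tail_diff[OF assms(1) \<open>\<alpha> < 2\<close>, of "n + 2"] by simp
  qed
  have "(\<lambda>n. theta_tail \<alpha> (n + 1)) \<longlonglongrightarrow> 0"
  proof (rule real_tendsto_sandwich)
    show "\<forall>\<^sub>F n in sequentially. 0 \<le> theta_tail \<alpha> (n + 1)"
      "\<forall>\<^sub>F n in sequentially. theta_tail \<alpha> (n + 1) \<le> 1 / real (n + 1)"
      using theta_tail_bounds[OF assms(1) \<open>\<alpha> < 2\<close>, of "n + 1" for n]
      by (auto intro: always_eventually less_imp_le)
    show "(\<lambda>n. 1 / real (n + 1)) \<longlonglongrightarrow> 0"
      using LIMSEQ_inverse_real_of_nat by (simp add: inverse_eq_divide)
  qed simp
  then have "(\<lambda>n. \<Sum>k<n + 2. theta \<alpha> k) \<longlonglongrightarrow> 1"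
    unfolding partial_sums using tendsto_diff[OF tendsto_const] by fastforce
  then show ?thesis
    unfolding sums_def by (rule LIMSEQ_offset)
qed

lemma sets_theta_measure [simp, measurable_cong]: "sets (theta_measure \<alpha>) = sets (count_space UNIV)"
  by (simp add: theta_measure_def)

lemma space_theta_measure [simp]: "space (theta_measure \<alpha>) = UNIV"
  by (simp add: theta_measure_def)

lemma nn_integral_theta_measure:
  "(\<integral>\<^sup>+k. f k \<partial>theta_measure \<alpha>) = (\<Sum>k. ennreal (theta \<alpha> k) * f k)"
  by (simp add: theta_measure_def nn_integral_density nn_integral_count_space_nat)

lemma prob_space_theta_measure:
  assumes "1 < \<alpha>" "\<alpha> \<le> 2"
  shows "prob_space (theta_measure \<alpha>)"
proof
  have "emeasure (theta_measure \<alpha>) UNIV = (\<Sum>k. ennreal (theta \<alpha> k))"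
    using nn_integral_theta_measure[where f="\<lambda>_. 1" and \<alpha>=\<alpha>] by simp
  also have "\<dots> = 1"
    using theta_sums[OF assms] theta_nonneg[OF assms]
    by (simp add: suminf_ennreal2 sums_summable sums_iff)
  finally show "emeasure (theta_measure \<alpha>) (space (theta_measure \<alpha>)) = 1"
    by simp
qed

lemma nn_integral_sqrt_theta_le:
  assumes "1 < \<alpha>" "\<alpha> \<le> 2"
  shows "(\<integral>\<^sup>+k. sqrt (real k) \<partial>theta_measure \<alpha>) \<le> 4 * (\<Sum>k. real k powr (-3/2))"
proof -
  have term_le: "theta \<alpha> k * sqrt (real k) \<le> 4 * real k powr (-3/2)" for k
  proof (cases "k = 0")
    case False
    have "theta \<alpha> k * sqrt (real k) \<le> 4 / (real k)\<^sup>2 * sqrt (real k)"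
      using theta_le[OF assms] by (intro mult_right_mono) auto
    also have "\<dots> = 4 * real k powr (-3/2)"
    proof -
      have "real k powr (-3/2) = real k powr (1/2) / real k powr 2"
        using powr_diff[of "real k" "1/2" 2] by simp
      then show ?thesis
        using False by (simp add: powr_half_sqrt powr_numeral)
    qed
    finally show ?thesis .
  qed simp
  have summable: "summable (\<lambda>k. 4 * real k powr (-3/2))"
    by (intro summable_mult) (simp add: summable_real_powr_iff)
  have "(\<integral>\<^sup>+k. sqrt (real k) \<partial>theta_measure \<alpha>) = (\<Sum>k. ennreal (theta \<alpha> k * sqrt (real k)))"
    using theta_nonneg[OF assms] by (simp add: nn_integral_theta_measure ennreal_mult)
  also have "\<dots> \<le> (\<Sum>k. ennreal (4 * real k powr (-3/2)))"
    by (intro suminf_le ennreal_leI term_le) auto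
  also have "\<dots> = ennreal (\<Sum>k. 4 * real k powr (-3/2))"
    using summable by (intro suminf_ennreal2) auto
  finally show ?thesis
    using summable by (simp add: suminf_mult)
qed

section \<open>Conductance of the truncated tree\<close>

lemma rem_above_snoc: "rem_above Y v (w @ [j]) = rem_above Y v w * (1 - Y (v @ w @ [j]))"
  by (induction w arbitrary: v) (simp_all add: mult.assoc)

lemma rem_below_snoc: "rem_below Y (u @ [i]) = rem_below Y u * (1 - Y u)"
  by (cases u rule: rev_exhaust) (simp_all add: rem_below_def rem_above_snoc butlast_append)

context
  fixes Y :: "nat list \<Rightarrow> real" and K :: "nat list \<Rightarrow> nat"
  assumes Y_range: "\<And>u. 0 < Y u \<and> Y u < 1"
    and K_pos: "\<And>u. 0 < K u"
begin

lemma rem_below_pos: "0 < rem_below Y u"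
proof (induction u rule: rev_induct)
  case Nil
  then show ?case by (simp add: rem_below_def)
next
  case (snoc i u)
  then show ?case using Y_range[of u] by (simp add: rem_below_snoc)
qed

lemma seg_len_pos: "0 < seg_len Y u"
  using rem_below_pos[of u] Y_range[of u] by (simp add: seg_len_def)

text \<open>Every path from the bottom of \<open>u\<close> to the shorted level has resistance at most
  \<open>rem_below Y u\<close>.\<close>
lemma cond_trunc_ge: "1 / rem_below Y u \<le> cond_trunc n Y K u"
proof (induction n arbitrary: u)
  case 0
  have "seg_len Y u \<le> rem_below Y u"
    using rem_below_pos[of u] Y_range[of u] by (simp add: seg_len_def mult_left_le)
  then show ?case
    using seg_len_pos[of u] by (simp add: frac_le)
next
  case (Suc n)
  define r where "r = rem_below Y u"
  define T where "T = (\<Sum>i<K u. cond_trunc n Y K (u @ [i]))"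
  have r_pos: "0 < r * (1 - Y u)"
    using rem_below_pos[of u] Y_range[of u] by (simp add: r_def)
  have child_ge: "1 / (r * (1 - Y u)) \<le> cond_trunc n Y K (u @ [i])" for i
    using Suc[of "u @ [i]"] by (simp add: rem_below_snoc r_def)
  have "cond_trunc n Y K (u @ [0]) \<le> T"
    unfolding T_def using K_pos[of u] r_pos
    by (intro member_le_sum) (auto intro: order_trans[OF _ child_ge] less_imp_le)
  then have "1 / (r * (1 - Y u)) \<le> T"
    using child_ge[of 0] by linarith
  moreover have "0 < 1 / (r * (1 - Y u))"
    using r_pos by simp
  ultimately have "0 < T"
    by linarith
  with \<open>1 / (r * (1 - Y u)) \<le> T\<close> have "1 / T \<le> r * (1 - Y u)"
    using r_pos by (simp add: field_simps)
  then have "seg_len Y u + 1 / T \<le> r"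
    by (simp add: seg_len_def r_def algebra_simps)
  moreover have "0 < seg_len Y u + 1 / T"
    using seg_len_pos[of u] \<open>0 < T\<close> by (intro add_pos_pos) auto
  ultimately show ?case
    by (simp add: T_def r_def frac_le)
qed

lemma cond_trunc_pos: "0 < cond_trunc n Y K u"
  using cond_trunc_ge[of u n] rem_below_pos[of u] by (smt (verit) divide_pos_pos)

lemma cond_trunc_Suc_le: "cond_trunc (Suc n) Y K u \<le> cond_trunc n Y K u"
proof (induction n arbitrary: u)
  case 0
  have "0 < (\<Sum>i<K u. cond_trunc 0 Y K (u @ [i]))"
    using K_pos[of u] cond_trunc_pos[of 0] by (intro sum_pos) auto
  then show ?case
    using seg_len_pos[of u] by (simp add: frac_le)
next
  case (Suc n)
  define T where "T = (\<Sum>i<K u. cond_trunc n Y K (u @ [i]))"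
  define T' where "T' = (\<Sum>i<K u. cond_trunc (Suc n) Y K (u @ [i]))"
  have "0 < T'"
    unfolding T'_def using K_pos[of u] by (intro sum_pos cond_trunc_pos) auto
  moreover have "T' \<le> T"
    unfolding T_def T'_def by (intro sum_mono Suc.IH)
  ultimately have "seg_len Y u + 1 / T \<le> seg_len Y u + 1 / T'"
    by (simp add: frac_le)
  moreover have "0 < seg_len Y u + 1 / T"
    using seg_len_pos[of u] \<open>0 < T'\<close> \<open>T' \<le> T\<close> by (intro add_pos_pos) auto
  ultimately show ?case
    by (simp add: T_def T'_def frac_le)
qed

lemma lim_cond_trunc_bounds:
  "1 \<le> lim (\<lambda>n. cond_trunc n Y K [])" "lim (\<lambda>n. cond_trunc n Y K []) \<le> cond_trunc 1 Y K []"
proof -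
  have lower: "\<forall>n. 1 \<le> cond_trunc n Y K []"
    using cond_trunc_ge[of "[]"] by (simp add: rem_below_def)
  obtain L where L: "(\<lambda>n. cond_trunc n Y K []) \<longlonglongrightarrow> L" "\<And>n. L \<le> cond_trunc n Y K []"
    using decseq_convergent[OF decseq_SucI[of "\<lambda>n. cond_trunc n Y K []", OF cond_trunc_Suc_le] lower] by blast
  show "1 \<le> lim (\<lambda>n. cond_trunc n Y K [])"
    using L(1) lower by (simp add: limI LIMSEQ_le_const)
  show "lim (\<lambda>n. cond_trunc n Y K []) \<le> cond_trunc 1 Y K []"
    by (simp only: limI[OF L(1)] L(2))
qed

end

lemma cond_trunc_one_Nil:
  "cond_trunc 1 Y K [] = 1 / (Y [] + 1 / (\<Sum>i<K []. 1 / ((1 - Y []) * Y [i])))"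
  by (simp add: seg_len_def rem_below_def)

section \<open>A series-parallel estimate\<close>

lemma sqrt_sum_le_sum_sqrt:
  fixes x :: "'a \<Rightarrow> real"
  assumes "\<And>i. i \<in> A \<Longrightarrow> 0 \<le> x i"
  shows "sqrt (sum x A) \<le> (\<Sum>i\<in>A. sqrt (x i))"
proof -
  have "(\<Sum>i\<in>A. (sqrt (x i))\<^sup>2) = sum x A"
    using assms by (intro sum.cong) auto
  then have "sqrt (sum x A) = L2_set (\<lambda>i. sqrt (x i)) A"
    by (simp add: L2_set_def)
  also have "\<dots> \<le> (\<Sum>i\<in>A. sqrt (x i))"
    by (rule L2_set_le_sum) (simp add: assms)
  finally show ?thesis .
qed

lemma series_conductance_le:
  fixes a S :: real
  assumes "0 < a" "0 < S"
  shows "1 / (a + 1 / S) \<le> 1 / a" "1 / (a + 1 / S) \<le> sqrt (S / a)"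
proof -
  show "1 / (a + 1 / S) \<le> 1 / a"
    using assms by (simp add: frac_le)
  have "sqrt (a / S) \<le> (a + 1 / S) / 2"
    using arith_geo_mean_sqrt[of a "1 / S"] assms by simp
  also have "\<dots> \<le> a + 1 / S"
    using assms by (simp add: field_simps)
  finally have "1 / (a + 1 / S) \<le> 1 / sqrt (a / S)"
    using assms by (intro frac_le) auto
  then show "1 / (a + 1 / S) \<le> sqrt (S / a)"
    by (simp add: real_sqrt_divide)
qed

lemma sqrt_inverse_le_powr:
  fixes a y :: real
  assumes "0 < y" "y < 1" "0 \<le> a" "a \<le> 1/2"
  shows "sqrt (1 / ((1 - a) * y)) \<le> 2 * y powr (-3/4)"
proof -
  have "1 / ((1 - a) * y) \<le> 4 * y powr (-1)"
    using assms by (simp add: powr_minus_divide field_simps)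
  also have "\<dots> \<le> 4 * y powr (-3/2)"
    using assms powr_mono'[of "-3/2" "-1" y] by simp
  finally have "sqrt (1 / ((1 - a) * y)) \<le> sqrt (4 * y powr (-3/2))"
    by (rule real_sqrt_le_mono)
  also have "\<dots> = 2 * y powr (-3/4)"
    using assms by (simp add: real_sqrt_mult powr_half_sqrt[symmetric] powr_powr)
  finally show ?thesis .
qed

lemma inverse_le_powr_mult:
  fixes a c :: real
  assumes "0 < a" "1 \<le> a powr (1/4) * c"
  shows "1 / a \<le> a powr (-3/4) * c"
proof -
  have "1 / a = a powr (-3/4) * (1 / a powr (1/4))"
    using assms(1) powr_add[of a "-3/4" "-1/4"] by (simp add: powr_minus_divide)
  also have "\<dots> \<le> a powr (-3/4) * c"
    using assms by (intro mult_left_mono) (simp_all add: divide_le_eq mult.commute)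
  finally show ?thesis .
qed

lemma inverse_sqrt_le_powr_div:
  fixes a c :: real
  assumes "0 < a" "0 < c" "a powr (1/4) * c \<le> 1"
  shows "1 / sqrt a \<le> a powr (-3/4) / c"
proof -
  have "1 / sqrt a = a powr (-3/4) * a powr (1/4)"
    using assms(1) powr_add[of a "-3/4" "1/4"] by (simp add: powr_minus_divide powr_half_sqrt)
  also have "\<dots> \<le> a powr (-3/4) * (1 / c)"
    using assms by (intro mult_left_mono) (simp_all add: le_divide_eq)
  finally show ?thesis
    by simp
qed

lemma series_parallel_le_small_root:
  fixes a :: real and y :: "nat \<Rightarrow> real"
  assumes a: "0 < a" "a < 1" and k: "0 < k" and y: "\<And>i. i < k \<Longrightarrow> 0 < y i \<and> y i < 1"
    and small: "a powr (1/4) * (2 * sqrt k) \<le> 1"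
  shows "1 / (a + 1 / (\<Sum>i<k. 1 / ((1 - a) * y i))) \<le> a powr (-3/4) * ((\<Sum>i<k. y i powr (-3/4)) / sqrt k)"
proof -
  define S where "S = (\<Sum>i<k. 1 / ((1 - a) * y i))"
  define Y where "Y = (\<Sum>i<k. y i powr (-3/4))"
  have "0 < S"
    unfolding S_def using k a y by (intro sum_pos) auto
  have "a powr (1/4) * 2 \<le> a powr (1/4) * (2 * sqrt k)"
    using k by (intro mult_left_mono) auto
  then have "a powr (1/4) \<le> 1/2"
    using small by linarith
  moreover have "a \<le> a powr (1/4)"
    using a powr_mono'[of "1/4" 1 a] by simp
  ultimately have "a \<le> 1/2"
    by linarith
  have "sqrt S \<le> (\<Sum>i<k. sqrt (1 / ((1 - a) * y i)))"
    unfolding S_def using a y by (intro sqrt_sum_le_sum_sqrt) (simp add: less_imp_le)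
  also have "\<dots> \<le> 2 * Y"
    unfolding Y_def sum_distrib_left using a y \<open>a \<le> 1/2\<close>
    by (intro sum_mono sqrt_inverse_le_powr) auto
  finally have "sqrt S \<le> 2 * Y" .
  have "1 / (a + 1 / S) \<le> sqrt S * (1 / sqrt a)"
    using series_conductance_le(2)[OF a(1) \<open>0 < S\<close>] by (simp add: real_sqrt_divide)
  also have "\<dots> \<le> 2 * Y * (a powr (-3/4) / (2 * sqrt k))"
    using \<open>sqrt S \<le> 2 * Y\<close> inverse_sqrt_le_powr_div[OF a(1) _ small] k a
    by (intro mult_mono) (auto simp: Y_def sum_nonneg)
  finally show ?thesis
    by (simp add: S_def Y_def mult_ac)
qed

text \<open>The threshold \<open>a = 1 / (16 k\<^sup>2)\<close> balances the two regimes \<open>1 / a\<close> and \<open>\<surd>(S / a)\<close> so that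
  both bounds grow like \<open>\<surd>k\<close> in the number of children.\<close>
lemma series_parallel_le:
  fixes a :: real and y :: "nat \<Rightarrow> real"
  assumes a: "0 < a" "a < 1" and k: "0 < k" and y: "\<And>i. i < k \<Longrightarrow> 0 < y i \<and> y i < 1"
  shows "1 / (a + 1 / (\<Sum>i<k. 1 / ((1 - a) * y i)))
    \<le> a powr (-3/4) * (2 * sqrt k + (\<Sum>i<k. y i powr (-3/4)) / sqrt k)"
proof -
  define S where "S = (\<Sum>i<k. 1 / ((1 - a) * y i))"
  have "0 < S"
    unfolding S_def using k a y by (intro sum_pos) auto
  have "0 \<le> a powr (-3/4) * ((\<Sum>i<k. y i powr (-3/4)) / sqrt k)"
    by (simp add: sum_nonneg)
  moreover have "0 \<le> a powr (-3/4) * (2 * sqrt k)"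
    by simp
  moreover have "1 / (a + 1 / S) \<le> a powr (-3/4) * (2 * sqrt k)
    \<or> 1 / (a + 1 / S) \<le> a powr (-3/4) * ((\<Sum>i<k. y i powr (-3/4)) / sqrt k)"
  proof (cases "1 \<le> a powr (1/4) * (2 * sqrt k)")
    case True
    then show ?thesis
      using series_conductance_le(1)[OF a(1) \<open>0 < S\<close>] inverse_le_powr_mult[OF a(1)] by fastforce
  next
    case False
    then show ?thesis
      unfolding S_def using series_parallel_le_small_root[OF a k y] by simp
  qed
  ultimately show ?thesis
    unfolding S_def distrib_left by linarith
qed

section \<open>The random tree\<close>

definition segment_law :: "real \<Rightarrow> (real \<times> nat) measure" where
  "segment_law \<alpha> = uniform_measure lborel {0..1} \<Otimes>\<^sub>M theta_measure \<alpha>"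

lemma tree_space_eq_PiM: "tree_space \<alpha> = PiM UNIV (\<lambda>_. segment_law \<alpha>)"
  by (simp add: tree_space_def segment_law_def)

lemma sets_segment_law [measurable_cong]:
  "sets (segment_law \<alpha>) = sets (borel \<Otimes>\<^sub>M count_space UNIV)"
  unfolding segment_law_def by (intro sets_pair_measure_cong) simp_all

lemma sets_tree_space [measurable_cong]:
  "sets (tree_space \<alpha>) = sets (PiM UNIV (\<lambda>_. borel \<Otimes>\<^sub>M count_space UNIV))"
  unfolding tree_space_eq_PiM by (intro sets_PiM_cong refl sets_segment_law)

lemma prob_space_segment_law:
  assumes "1 < \<alpha>" "\<alpha> \<le> 2"
  shows "prob_space (segment_law \<alpha>)"
proof -
  interpret U: prob_space "uniform_measure lborel {0..1::real}"
    by (intro prob_space_uniform_measure) auto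
  interpret T: prob_space "theta_measure \<alpha>"
    by (rule prob_space_theta_measure[OF assms])
  interpret pair_prob_space "uniform_measure lborel {0..1::real}" "theta_measure \<alpha>" ..
  show ?thesis
    unfolding segment_law_def by unfold_locales
qed

lemma product_prob_space_segment_law:
  assumes "1 < \<alpha>" "\<alpha> \<le> 2"
  shows "product_prob_space (\<lambda>_::nat list. segment_law \<alpha>)"
  by (intro product_prob_spaceI prob_space_segment_law[OF assms])

lemma measurable_rem_above [measurable]:
  "(\<lambda>\<omega>. rem_above (\<lambda>u. fst (\<omega> u)) v w) \<in> borel_measurable (tree_space \<alpha>)"
  by (induction w arbitrary: v) simp_all

lemma measurable_conductance [measurable]: "conductance \<in> borel_measurable (tree_space \<alpha>)"
proof -
  have "(\<lambda>\<omega>. cond_trunc n (\<lambda>u. fst (\<omega> u)) (\<lambda>u. snd (\<omega> u)) u) \<in> borel_measurable (tree_space \<alpha>)"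
    for n u
    by (induction n arbitrary: u) (simp_all add: seg_len_def rem_below_def)
  then show ?thesis
    unfolding conductance_def[abs_def] by (rule borel_measurable_lim_metric)
qed

lemma AE_tree_space_range:
  assumes "1 < \<alpha>" "\<alpha> \<le> 2"
  shows "AE \<omega> in tree_space \<alpha>. \<forall>u. 0 < fst (\<omega> u) \<and> fst (\<omega> u) < 1 \<and> 0 < snd (\<omega> u)"
proof -
  interpret U: prob_space "uniform_measure lborel {0..1::real}"
    by (intro prob_space_uniform_measure) auto
  interpret T: prob_space "theta_measure \<alpha>"
    by (rule prob_space_theta_measure[OF assms])
  interpret pair_prob_space "uniform_measure lborel {0..1::real}" "theta_measure \<alpha>" ..
  have "AE a in uniform_measure lborel {0..1::real}. 0 < a \<and> a < 1"
  proof (rule AE_uniform_measureI)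
    show "AE x in lborel. x \<in> {0..1::real} \<longrightarrow> 0 < x \<and> x < 1"
      using AE_lborel_singleton[of 0] AE_lborel_singleton[of 1] by eventually_elim auto
  qed simp
  moreover have "AE k in theta_measure \<alpha>. 0 < k"
    unfolding theta_measure_def by (subst AE_density) (auto simp: AE_count_space theta_def)
  moreover have "{z \<in> space (segment_law \<alpha>). 0 < fst z \<and> fst z < 1 \<and> 0 < snd z}
      \<in> sets (segment_law \<alpha>)"
    by measurable
  ultimately have "AE z in segment_law \<alpha>. 0 < fst z \<and> fst z < 1 \<and> 0 < snd z"
    unfolding segment_law_def by (intro AE_pair_measure) (auto elim: AE_mp)
  then show ?thesis
    unfolding AE_all_countable tree_space_eq_PiM
    by (auto intro: AE_PiM_component prob_space_segment_law[OF assms])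
qed

lemma (in product_prob_space) nn_integral_PiM_prod:
  assumes "finite J" "J \<subseteq> I" "\<And>i. i \<in> J \<Longrightarrow> f i \<in> borel_measurable (M i)"
  shows "(\<integral>\<^sup>+x. (\<Prod>i\<in>J. f i (x i)) \<partial>PiM I M) = (\<Prod>i\<in>J. \<integral>\<^sup>+x. f i x \<partial>M i)"
proof -
  have "(\<integral>\<^sup>+x. (\<Prod>i\<in>J. f i (x i)) \<partial>PiM I M)
      = (\<integral>\<^sup>+x. (\<Prod>i\<in>J. f i (x i)) \<partial>distr (PiM I M) (PiM J M) (\<lambda>x. restrict x J))"
    using assms by (subst nn_integral_distr) (auto intro!: measurable_restrict_subset)
  also have "\<dots> = (\<integral>\<^sup>+x. (\<Prod>i\<in>J. f i (x i)) \<partial>PiM J M)"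
    using assms by (simp add: distr_PiM_restrict_finite)
  also have "\<dots> = (\<Prod>i\<in>J. \<integral>\<^sup>+x. f i x \<partial>M i)"
    using assms by (intro product_nn_integral_prod) auto
  finally show ?thesis .
qed

lemma (in sigma_finite_measure) nn_integral_pair_measure_mult:
  assumes [measurable]: "f \<in> borel_measurable N" "g \<in> borel_measurable M"
  shows "(\<integral>\<^sup>+z. f (fst z) * g (snd z) \<partial>(N \<Otimes>\<^sub>M M)) = (\<integral>\<^sup>+x. f x \<partial>N) * (\<integral>\<^sup>+y. g y \<partial>M)"
proof -
  have "(\<integral>\<^sup>+z. f (fst z) * g (snd z) \<partial>(N \<Otimes>\<^sub>M M)) = (\<integral>\<^sup>+x. \<integral>\<^sup>+y. f x * g y \<partial>M \<partial>N)"
    by (subst nn_integral_fst[symmetric]) simp_all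
  also have "\<dots> = (\<integral>\<^sup>+x. f x * (\<integral>\<^sup>+y. g y \<partial>M) \<partial>N)"
    by (simp add: nn_integral_cmult)
  finally show ?thesis
    by (simp add: nn_integral_multc)
qed

lemma nn_integral_uniform_powr: "(\<integral>\<^sup>+a. a powr (-3/4) \<partial>uniform_measure lborel {0..1::real}) = 4"
proof -
  have "((\<lambda>x::real. x powr (-3/4)) has_integral 4) {0..1}"
    using has_integral_powr_from_0[of "-3/4" 1] by simp
  from nn_integral_has_integral_lebesgue'[OF _ this]
  have "(\<integral>\<^sup>+x. ennreal (x powr (-3/4)) * indicator {0..1::real} x \<partial>lborel) = 4"
    by simp
  then show ?thesis
    by (simp add: nn_integral_uniform_measure divide_ennreal_def)
qed

lemma conductance_bounds:
  assumes range: "\<forall>u. 0 < fst (\<omega> u) \<and> fst (\<omega> u) < 1 \<and> 0 < snd (\<omega> u)"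
  defines "a \<equiv> fst (\<omega> [])" and "k \<equiv> snd (\<omega> [])"
  shows "1 \<le> conductance \<omega>"
    and "conductance \<omega> \<le> a powr (-3/4) * (2 * sqrt k + (\<Sum>i<k. fst (\<omega> [i]) powr (-3/4)) / sqrt k)"
proof -
  define Y where "Y = (\<lambda>u. fst (\<omega> u))"
  define K where "K = (\<lambda>u. snd (\<omega> u))"
  have Y: "\<And>u. 0 < Y u \<and> Y u < 1" and K: "\<And>u. 0 < K u"
    using range by (simp_all add: Y_def K_def)
  have C: "conductance \<omega> = lim (\<lambda>n. cond_trunc n Y K [])"
    by (simp add: conductance_def Y_def K_def)
  show "1 \<le> conductance \<omega>"
    unfolding C by (rule lim_cond_trunc_bounds(1)[of Y K, OF Y K])
  have "conductance \<omega> \<le> cond_trunc 1 Y K []"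
    unfolding C by (rule lim_cond_trunc_bounds(2)[of Y K, OF Y K])
  also have "\<dots> = 1 / (a + 1 / (\<Sum>i<k. 1 / ((1 - a) * fst (\<omega> [i]))))"
    unfolding cond_trunc_one_Nil a_def k_def Y_def K_def ..
  also have "\<dots> \<le> a powr (-3/4) * (2 * sqrt k + (\<Sum>i<k. fst (\<omega> [i]) powr (-3/4)) / sqrt k)"
    using range unfolding a_def k_def by (intro series_parallel_le) auto
  finally show "conductance \<omega> \<le> a powr (-3/4) * (2 * sqrt k + (\<Sum>i<k. fst (\<omega> [i]) powr (-3/4)) / sqrt k)" .
qed

text \<open>The bound of \<open>conductance_bounds\<close> is \<open>2 root_weight (\<omega> [])\<close> plus, for each child \<open>i\<close>,
  \<open>child_weight i (\<omega> [])\<close> times a function of \<open>\<omega> [i]\<close>: every term is a product over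
  independent marks.\<close>
definition root_weight :: "real \<times> nat \<Rightarrow> ennreal" where
  "root_weight z = ennreal (fst z powr (-3/4) * sqrt (real (snd z)))"

definition child_weight :: "nat \<Rightarrow> real \<times> nat \<Rightarrow> ennreal" where
  "child_weight i z = (if i < snd z then ennreal (fst z powr (-3/4) / sqrt (real (snd z))) else 0)"

lemma measurable_root_weight [measurable]: "root_weight \<in> borel_measurable (segment_law \<alpha>)"
  unfolding root_weight_def[abs_def] by measurable

lemma measurable_child_weight [measurable]: "child_weight i \<in> borel_measurable (segment_law \<alpha>)"
  unfolding child_weight_def[abs_def] by measurable

lemma suminf_child_weight: "(\<Sum>i. child_weight i z) = root_weight z"
proof -
  define c where "c = fst z powr (-3/4) / sqrt (real (snd z))"
  have "(\<Sum>i. child_weight i z) = (\<Sum>i<snd z. ennreal c)"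
    by (subst suminf_finite[of "{..<snd z}"]) (auto simp: child_weight_def c_def)
  also have "\<dots> = ennreal (real (snd z) * c)"
    using ennreal_mult'[of "real (snd z)" c] by (simp add: ennreal_of_nat_eq_real_of_nat)
  also have "real (snd z) * c = fst z powr (-3/4) * (real (snd z) / sqrt (real (snd z)))"
    by (simp add: c_def)
  finally show ?thesis
    by (simp add: root_weight_def real_div_sqrt)
qed

lemma ennreal_conductance_le:
  assumes range: "\<forall>u. 0 < fst (\<omega> u) \<and> fst (\<omega> u) < 1 \<and> 0 < snd (\<omega> u)"
  shows "ennreal (conductance \<omega>)
    \<le> 2 * root_weight (\<omega> []) + (\<Sum>i. child_weight i (\<omega> []) * ennreal (fst (\<omega> [i]) powr (-3/4)))"
proof -
  define a where "a = fst (\<omega> [])"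
  define k where "k = snd (\<omega> [])"
  define y where "y i = fst (\<omega> [i]) powr (-3/4)" for i
  define c where "c = a powr (-3/4) / sqrt k"
  have "conductance \<omega> \<le> 2 * (a powr (-3/4) * sqrt k) + (\<Sum>i<k. c * y i)"
    using conductance_bounds(2)[OF range]
    by (simp add: a_def k_def y_def c_def algebra_simps sum_divide_distrib sum_distrib_left)
  then have "ennreal (conductance \<omega>) \<le> ennreal (2 * (a powr (-3/4) * sqrt k)) + ennreal (\<Sum>i<k. c * y i)"
    by (simp add: c_def y_def sum_nonneg flip: ennreal_plus)
  also have "\<dots> = 2 * ennreal (a powr (-3/4) * sqrt k) + (\<Sum>i<k. ennreal c * ennreal (y i))"
  proof -
    have "0 \<le> c" "\<And>i. 0 \<le> y i"
      by (simp_all add: c_def y_def)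
    then show ?thesis
      using ennreal_mult'[of 2 "a powr (-3/4) * sqrt k"]
      by (simp add: ennreal_mult' flip: sum_ennreal)
  qed
  also have "(\<Sum>i<k. ennreal c * ennreal (y i))
      = (\<Sum>i. child_weight i (\<omega> []) * ennreal (fst (\<omega> [i]) powr (-3/4)))"
    by (subst suminf_finite[of "{..<k}"]) (auto simp: child_weight_def a_def k_def y_def c_def)
  finally show ?thesis
    by (simp add: root_weight_def a_def k_def)
qed

lemma nn_integral_root_weight_le:
  assumes "1 < \<alpha>" "\<alpha> \<le> 2"
  shows "(\<integral>\<^sup>+z. root_weight z \<partial>segment_law \<alpha>) \<le> 16 * (\<Sum>k. real k powr (-3/2))"
proof -
  interpret T: prob_space "theta_measure \<alpha>"
    by (rule prob_space_theta_measure[OF assms])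
  have "(\<integral>\<^sup>+z. root_weight z \<partial>segment_law \<alpha>)
      = (\<integral>\<^sup>+a. a powr (-3/4) \<partial>uniform_measure lborel {0..1::real})
        * (\<integral>\<^sup>+k. sqrt (real k) \<partial>theta_measure \<alpha>)"
    unfolding segment_law_def root_weight_def
    by (subst T.nn_integral_pair_measure_mult[symmetric]) (simp_all add: ennreal_mult)
  also have "\<dots> \<le> 4 * ennreal (4 * (\<Sum>k. real k powr (-3/2)))"
    unfolding nn_integral_uniform_powr
    by (intro mult_left_mono nn_integral_sqrt_theta_le[OF assms]) simp
  also have "\<dots> = ennreal (16 * (\<Sum>k. real k powr (-3/2)))"
    using ennreal_mult'[of 4 "4 * (\<Sum>k. real k powr (-3/2))"] by simp
  finally show ?thesis .
qed

lemma nn_integral_segment_powr: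
  assumes "1 < \<alpha>" "\<alpha> \<le> 2"
  shows "(\<integral>\<^sup>+z. fst z powr (-3/4) \<partial>segment_law \<alpha>) = 4"
proof -
  interpret T: prob_space "theta_measure \<alpha>"
    by (rule prob_space_theta_measure[OF assms])
  have "(\<integral>\<^sup>+z. fst z powr (-3/4) \<partial>segment_law \<alpha>)
      = (\<integral>\<^sup>+a. a powr (-3/4) \<partial>uniform_measure lborel {0..1::real}) * (\<integral>\<^sup>+k. 1 \<partial>theta_measure \<alpha>)"
    unfolding segment_law_def
    by (subst T.nn_integral_pair_measure_mult[symmetric]) simp_all
  then show ?thesis
    using T.emeasure_space_1 nn_integral_uniform_powr by simp
qed

lemma nn_integral_conductance_le:
  assumes "1 < \<alpha>" "\<alpha> \<le> 2"
  shows "(\<integral>\<^sup>+\<omega>. conductance \<omega> \<partial>tree_space \<alpha>) \<le> 96 * (\<Sum>k. real k powr (-3/2))"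
proof -
  interpret product_prob_space "\<lambda>_::nat list. segment_law \<alpha>" UNIV
    by (rule product_prob_space_segment_law[OF assms])
  let ?h = "\<lambda>z. ennreal (fst z powr (-3/4))"
  let ?W = "\<integral>\<^sup>+z. root_weight z \<partial>segment_law \<alpha>"
  have [measurable]: "?h \<in> borel_measurable (segment_law \<alpha>)"
    by measurable
  have root: "(\<integral>\<^sup>+\<omega>. root_weight (\<omega> []) \<partial>tree_space \<alpha>) = ?W"
    using nn_integral_PiM_prod[of "{[]}" "\<lambda>_. root_weight"] by (simp add: tree_space_eq_PiM)
  have child: "(\<integral>\<^sup>+\<omega>. child_weight i (\<omega> []) * ?h (\<omega> [i]) \<partial>tree_space \<alpha>)
      = (\<integral>\<^sup>+z. child_weight i z \<partial>segment_law \<alpha>) * 4" for i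
    using nn_integral_PiM_prod[of "{[], [i]}" "\<lambda>u. if u = [] then child_weight i else ?h"]
      nn_integral_segment_powr[OF assms]
    by (simp add: tree_space_eq_PiM)
  have "(\<integral>\<^sup>+\<omega>. conductance \<omega> \<partial>tree_space \<alpha>)
      \<le> (\<integral>\<^sup>+\<omega>. 2 * root_weight (\<omega> []) + (\<Sum>i. child_weight i (\<omega> []) * ?h (\<omega> [i])) \<partial>tree_space \<alpha>)"
    using AE_tree_space_range[OF assms]
    by (intro nn_integral_mono_AE) (elim eventually_mono, rule ennreal_conductance_le)
  also have "\<dots> = 2 * (\<integral>\<^sup>+\<omega>. root_weight (\<omega> []) \<partial>tree_space \<alpha>)
      + (\<Sum>i. \<integral>\<^sup>+\<omega>. child_weight i (\<omega> []) * ?h (\<omega> [i]) \<partial>tree_space \<alpha>)"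
    by (simp add: nn_integral_add nn_integral_cmult nn_integral_suminf)
  also have "\<dots> = 2 * ?W + (\<Sum>i. \<integral>\<^sup>+z. child_weight i z \<partial>segment_law \<alpha>) * 4"
    unfolding root child by (simp add: ennreal_suminf_multc)
  also have "\<dots> = 2 * ?W + 4 * ?W"
    by (simp add: nn_integral_suminf[symmetric] suminf_child_weight mult.commute)
  also have "\<dots> = 6 * ?W"
    by (simp flip: distrib_right)
  also have "\<dots> \<le> 6 * ennreal (16 * (\<Sum>k. real k powr (-3/2)))"
    by (intro mult_left_mono nn_integral_root_weight_le[OF assms]) simp
  also have "\<dots> = ennreal (96 * (\<Sum>k. real k powr (-3/2)))"
    using ennreal_mult'[of 6 "16 * (\<Sum>k. real k powr (-3/2))"] by simp
  finally show ?thesis .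
qed

section \<open>The denominator of \<open>\<beta>\<close>\<close>

lemma harmonic_ratio_bounds:
  fixes s t :: real
  assumes "1 \<le> s" "1 \<le> t"
  shows "1 \<le> s * t / (s + t - 1)" "s * t / (s + t - 1) \<le> s"
proof -
  have "0 \<le> (s - 1) * (t - 1)" "0 \<le> s * (s - 1)"
    using assms by simp_all
  then show "1 \<le> s * t / (s + t - 1)" "s * t / (s + t - 1) \<le> s"
    using assms by (simp_all add: field_simps)
qed

lemma harmonic_double_integral_cases:
  fixes M :: "real measure"
  assumes "prob_space M" and [measurable_cong]: "sets M = sets borel" and "AE s in M. 1 \<le> s"
  defines "D \<equiv> \<integral>s. (\<integral>t. s * t / (s + t - 1) \<partial>M) \<partial>M"
  shows "D = 0 \<or> 1 \<le> D"
proof -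
  interpret prob_space M by fact
  have inner: "1 \<le> (\<integral>t. s * t / (s + t - 1) \<partial>M)" if "1 \<le> s" for s
  proof (rule integral_ge_const)
    show "AE t in M. 1 \<le> s * t / (s + t - 1)"
      using assms(3) by eventually_elim (rule harmonic_ratio_bounds(1)[OF \<open>1 \<le> s\<close>])
    have "AE t in M. norm (s * t / (s + t - 1)) \<le> s"
      using assms(3)
    proof eventually_elim
      case (elim t)
      then show ?case
        using harmonic_ratio_bounds[OF \<open>1 \<le> s\<close> elim] by simp
    qed
    then show "integrable M (\<lambda>t. s * t / (s + t - 1))"
      by (intro integrable_const_bound) simp_all
  qed
  show ?thesis
  proof (cases "integrable M (\<lambda>s. \<integral>t. s * t / (s + t - 1) \<partial>M)")
    case True
    then show ?thesis
      using assms(3) unfolding D_def by (intro disjI2 integral_ge_const) (auto elim: eventually_mono intro: inner)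
  qed (simp add: D_def not_integrable_integral_eq)
qed

lemma prob_space_gamma_law:
  assumes "1 < \<alpha>" "\<alpha> \<le> 2"
  shows "prob_space (gamma_law \<alpha>)"
proof -
  interpret product_prob_space "\<lambda>_::nat list. segment_law \<alpha>" UNIV
    by (rule product_prob_space_segment_law[OF assms])
  show ?thesis
    unfolding gamma_law_def tree_space_eq_PiM by (intro prob_space_distr) simp
qed

lemma AE_gamma_law_ge_one:
  assumes "1 < \<alpha>" "\<alpha> \<le> 2"
  shows "AE s in gamma_law \<alpha>. 1 \<le> s"
  unfolding gamma_law_def using AE_tree_space_range[OF assms]
  by (subst AE_distr_iff) (auto elim: eventually_mono intro: conductance_bounds(1))

lemma mean_gamma_law_bounds:
  assumes "1 < \<alpha>" "\<alpha> \<le> 2"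
  shows "0 \<le> (\<integral>s. s \<partial>gamma_law \<alpha>)" "(\<integral>s. s \<partial>gamma_law \<alpha>) \<le> 96 * (\<Sum>k. real k powr (-3/2))"
proof -
  have "(\<integral>s. s \<partial>gamma_law \<alpha>) = (\<integral>\<omega>. conductance \<omega> \<partial>tree_space \<alpha>)"
    unfolding gamma_law_def by (rule integral_distr) simp_all
  also have "\<dots> = enn2real (\<integral>\<^sup>+\<omega>. conductance \<omega> \<partial>tree_space \<alpha>)"
    using AE_tree_space_range[OF assms]
    by (intro integral_eq_nn_integral) (auto elim!: eventually_mono dest: conductance_bounds(1))
  finally have mean: "(\<integral>s. s \<partial>gamma_law \<alpha>) = enn2real (\<integral>\<^sup>+\<omega>. conductance \<omega> \<partial>tree_space \<alpha>)" .
  show "0 \<le> (\<integral>s. s \<partial>gamma_law \<alpha>)"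
    unfolding mean by simp
  have "0 \<le> (\<Sum>k. real k powr (-3/2))"
    by (intro suminf_nonneg) (simp_all add: summable_real_powr_iff)
  then show "(\<integral>s. s \<partial>gamma_law \<alpha>) \<le> 96 * (\<Sum>k. real k powr (-3/2))"
    unfolding mean by (intro enn2real_leI nn_integral_conductance_le[OF assms]) simp
qed

lemma beta_le_half_mean_square:
  assumes "1 < \<alpha>" "\<alpha> \<le> 2"
  shows "beta \<alpha> \<le> (\<integral>s. s \<partial>gamma_law \<alpha>)\<^sup>2 / 2"
proof -
  define m where "m = (\<integral>s. s \<partial>gamma_law \<alpha>)"
  define D where "D = (\<integral>s. (\<integral>t. s * t / (s + t - 1) \<partial>gamma_law \<alpha>) \<partial>gamma_law \<alpha>)"
  have "D = 0 \<or> 1 \<le> D"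
    unfolding D_def using prob_space_gamma_law[OF assms] AE_gamma_law_ge_one[OF assms]
    by (intro harmonic_double_integral_cases) (simp_all add: gamma_law_def)
  then have "m\<^sup>2 / D \<le> m\<^sup>2"
    by (auto simp: divide_le_eq mult_le_cancel_left1)
  moreover have "beta \<alpha> = (m\<^sup>2 / D - 1) / 2"
    by (simp add: beta_def m_def D_def)
  ultimately show ?thesis
    by (simp add: m_def)
qed

theorem theorem3:
  shows "\<exists>C::real. \<forall>\<alpha>::real. 1 < \<alpha> \<and> \<alpha> \<le> 2 \<longrightarrow> beta \<alpha> < C"
proof (intro exI allI impI)
  define B where "B = 96 * (\<Sum>k. real k powr (-3/2))"
  fix \<alpha> :: real
  assume "1 < \<alpha> \<and> \<alpha> \<le> 2"
  then have "1 < \<alpha>" "\<alpha> \<le> 2" by simp_all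
  have "beta \<alpha> \<le> (\<integral>s. s \<partial>gamma_law \<alpha>)\<^sup>2 / 2"
    by (rule beta_le_half_mean_square) fact+
  also have "\<dots> \<le> B\<^sup>2 / 2"
    using mean_gamma_law_bounds[OF \<open>1 < \<alpha>\<close> \<open>\<alpha> \<le> 2\<close>] unfolding B_def
    by (intro divide_right_mono power_mono) simp_all
  finally show "beta \<alpha> < B\<^sup>2 / 2 + 1"
    by simp
qed

end
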